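(* Let $a\in\mathbb{D}\setminus\{0\}$ and let $\alpha,\beta,\gamma\in\mathbb{C}$ with $\alpha\ne0$, $\gamma\neq0$. If $g=\alpha z+\beta+\gamma K_a$ is $\mathcal{H}^2_{\omega}$-inner, then $g(a)=0$, $g(0)=0$ (i.e. $\beta+\gamma=0$), and $g$ is a unimodular constant multiple of $$B_2(z)=\frac{(1-K_a(a))z-a(1-K_a(z))}{\sqrt{(K_a(a)-1)\big((K_a(a)-1)\omega_1-|a|^2\big)}},$$ where the denominator equals $\|(1-K_a(a))z-a(1-K_a)\|_{\mathcal{H}^2_{\omega}}$.
   Context: Let $\omega=\{\omega_n\}_{n\geq 0}$ be a sequence of positive reals with $\omega_0=1$ and $\lim_{n\to\infty}\omega_{n+1}/\omega_n=1$. $\mathcal{H}^2_{\omega}$ is the Hilbert space of power series $f(z)=\sum_{n\ge0}a_nz^n$ with $\|f\|^2=\sum_{n\geq0}\omega_n|a_n|^2<\infty$ and inner product $\langle f,g\rangle=\sum_n\omega_na_n\overline{b_n}$; its reproducing kernel on $\mathbb{D}$ is $K_\lambda(z)=\sum_{n\ge0}\overline{\lambda}^nz^n/\omega_n$. A function $f$ is $\mathcal{H}^2_{\omega}$-inner if $\|f\|=1$ and $\langle z^mf,f\rangle=0$ for all integers $m\geq1$. *)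

theory Defs
  imports "HOL-Analysis.Analysis"
begin

text \<open>Elements of the weighted Hardy space are represented by their Taylor
coefficient sequences f :: nat => complex, f n = n-th coefficient.\<close>

definition wnorm2 :: "(nat \<Rightarrow> real) \<Rightarrow> (nat \<Rightarrow> complex) \<Rightarrow> real" where
  "wnorm2 \<omega> f = (\<Sum>n. \<omega> n * (cmod (f n))^2)"

definition inH :: "(nat \<Rightarrow> real) \<Rightarrow> (nat \<Rightarrow> complex) \<Rightarrow> bool" where
  "inH \<omega> f \<longleftrightarrow> summable (\<lambda>n. \<omega> n * (cmod (f n))^2)"

definition winner :: "(nat \<Rightarrow> real) \<Rightarrow> (nat \<Rightarrow> complex) \<Rightarrow> (nat \<Rightarrow> complex) \<Rightarrow> complex" where
  "winner \<omega> f g = (\<Sum>n. complex_of_real (\<omega> n) * f n * cnj (g n))"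

definition zpow_mult :: "nat \<Rightarrow> (nat \<Rightarrow> complex) \<Rightarrow> nat \<Rightarrow> complex" where
  "zpow_mult m f n = (if m \<le> n then f (n - m) else 0)"

definition is_inner :: "(nat \<Rightarrow> real) \<Rightarrow> (nat \<Rightarrow> complex) \<Rightarrow> bool" where
  "is_inner \<omega> f \<longleftrightarrow> inH \<omega> f \<and> wnorm2 \<omega> f = 1 \<and>
     (\<forall>m::nat. m \<ge> 1 \<longrightarrow> winner \<omega> (zpow_mult m f) f = 0)"

definition kernel :: "(nat \<Rightarrow> real) \<Rightarrow> complex \<Rightarrow> nat \<Rightarrow> complex" where
  "kernel \<omega> l n = cnj l ^ n / complex_of_real (\<omega> n)"

definition peval :: "(nat \<Rightarrow> complex) \<Rightarrow> complex \<Rightarrow> complex" where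
  "peval f z = (\<Sum>n. f n * z ^ n)"

definition zcoef :: "nat \<Rightarrow> complex" where
  "zcoef n = (if n = 1 then 1 else 0)"

definition onecoef :: "nat \<Rightarrow> complex" where
  "onecoef n = (if n = 0 then 1 else 0)"

end

theory Submission
  imports Defs
begin

text \<open>By the reproducing property \<open>\<langle>f, K\<^sub>a\<rangle> = f(a)\<close> and since \<open>\<alpha> z + \<beta>\<close> has only two
  coefficients, \<open>\<langle>z\<^sup>m g, g\<rangle> = \<omega>\<^sub>1 (z\<^sup>m g)\<^sub>1 \<alpha>\<^sup>* + (z\<^sup>m g)\<^sub>0 \<beta>\<^sup>* + \<gamma>\<^sup>* a\<^sup>m g(a)\<close>.
  Orthogonality for \<open>m = 2\<close> gives \<open>g(a) = 0\<close>, and then for \<open>m = 1\<close> it gives \<open>g(0) = 0\<close>.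
  These two linear conditions force \<open>g = (\<gamma>/a) N\<close> with \<open>N = (1 - K\<^sub>a(a)) z - a (1 - K\<^sub>a)\<close>,
  and \<open>\<parallel>N\<parallel>\<^sup>2 = (K\<^sub>a(a) - 1)((K\<^sub>a(a) - 1) \<omega>\<^sub>1 - |a|\<^sup>2)\<close> follows from
  \<open>K\<^sub>a(a) = \<Sum>\<^sub>n (|a|\<^sup>2)\<^sup>n / \<omega>\<^sub>n\<close>; the normalisation \<open>\<parallel>g\<parallel> = 1\<close> makes the factor unimodular.\<close>

lemma summable_kernel_weights:
  fixes \<omega> :: "nat \<Rightarrow> real" and a :: complex
  assumes pos: "\<And>n. \<omega> n > 0"
    and ratio: "(\<lambda>n. \<omega> (Suc n) / \<omega> n) \<longlonglongrightarrow> 1"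
    and aD: "cmod a < 1"
  shows "summable (\<lambda>n. (cmod a ^ 2) ^ n / \<omega> n)"
proof -
  define r where "r = cmod a ^ 2"
  define c where "c = (1 + r) / 2"
  have r: "0 \<le> r" "r < 1" using aD by (auto simp: r_def power_less_one_iff abs_square_less_1)
  have "(\<lambda>n. r * inverse (\<omega> (Suc n) / \<omega> n)) \<longlonglongrightarrow> r * inverse 1"
    using ratio by (intro tendsto_intros) auto
  then have "(\<lambda>n. r * (\<omega> n / \<omega> (Suc n))) \<longlonglongrightarrow> r" by simp
  then have "eventually (\<lambda>n. r * (\<omega> n / \<omega> (Suc n)) < c) sequentially"
    using r by (intro order_tendstoD) (auto simp: c_def)
  then obtain N where N: "\<And>n. n \<ge> N \<Longrightarrow> r * (\<omega> n / \<omega> (Suc n)) < c"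
    by (auto simp: eventually_sequentially)
  show ?thesis
    unfolding r_def[symmetric]
  proof (rule summable_ratio_test)
    show "c < 1" using r by (simp add: c_def)
    fix n assume "n \<ge> N"
    have "r ^ Suc n / \<omega> (Suc n) = (r * (\<omega> n / \<omega> (Suc n))) * (r ^ n / \<omega> n)"
      using pos[of n] by (simp add: field_simps)
    also have "\<dots> \<le> c * (r ^ n / \<omega> n)"
      using N[OF \<open>n \<ge> N\<close>] pos[of n] r by (intro mult_right_mono) auto
    finally show "norm (r ^ Suc n / \<omega> (Suc n)) \<le> c * norm (r ^ n / \<omega> n)"
      using pos[of n] pos[of "Suc n"] r by simp
  qed
qed

lemma kernel_mult_power: "kernel \<omega> a n * a ^ n = of_real ((cmod a ^ 2) ^ n / \<omega> n)"
proof -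
  have "cnj a ^ n * a ^ n = of_real ((cmod a ^ 2) ^ n)"
    by (metis complex_norm_square mult.commute of_real_power power_mult_distrib)
  then show ?thesis by (simp add: kernel_def)
qed

lemma weighted_norm_kernel:
  assumes "\<omega> n > 0"
  shows "\<omega> n * cmod (c * kernel \<omega> a n) ^ 2 = cmod c ^ 2 * ((cmod a ^ 2) ^ n / \<omega> n)"
  using assms by (simp add: kernel_def norm_mult norm_divide norm_power power_mult_distrib
      power_divide power2_eq_square field_simps flip: power_mult)

lemma peval_kernel_self:
  assumes "summable (\<lambda>n. (cmod a ^ 2) ^ n / \<omega> n)"
  shows "(\<lambda>n. kernel \<omega> a n * a ^ n) sums peval (kernel \<omega> a) a"
    and "peval (kernel \<omega> a) a = of_real (\<Sum>n. (cmod a ^ 2) ^ n / \<omega> n)"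
proof -
  have "(\<lambda>n. kernel \<omega> a n * a ^ n) sums of_real (\<Sum>n. (cmod a ^ 2) ^ n / \<omega> n)"
    unfolding kernel_mult_power sums_of_real_iff using assms by (rule summable_sums)
  then show "(\<lambda>n. kernel \<omega> a n * a ^ n) sums peval (kernel \<omega> a) a"
    and "peval (kernel \<omega> a) a = of_real (\<Sum>n. (cmod a ^ 2) ^ n / \<omega> n)"
    by (auto simp: peval_def sums_iff)
qed

lemma sums_zpow_mult:
  assumes "(\<lambda>n. f n * z ^ n) sums s"
  shows "(\<lambda>n. zpow_mult m f n * z ^ n) sums (z ^ m * s)"
proof -
  have "(\<lambda>n. zpow_mult m f (n + m) * z ^ (n + m)) = (\<lambda>n. z ^ m * (f n * z ^ n))"
    by (simp add: zpow_mult_def power_add mult_ac)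
  then have "(\<lambda>n. zpow_mult m f (n + m) * z ^ (n + m)) sums (z ^ m * s)"
    using sums_mult[OF assms] by simp
  then show ?thesis
    by (subst (asm) sums_zero_iff_shift) (simp_all add: zpow_mult_def)
qed

definition affine_kernel_comb ::
    "(nat \<Rightarrow> real) \<Rightarrow> complex \<Rightarrow> complex \<Rightarrow> complex \<Rightarrow> complex \<Rightarrow> nat \<Rightarrow> complex" where
  "affine_kernel_comb \<omega> a \<alpha> \<beta> \<gamma> n = \<alpha> * zcoef n + \<beta> * onecoef n + \<gamma> * kernel \<omega> a n"

lemma sums_affine_kernel_comb:
  assumes "(\<lambda>n. kernel \<omega> a n * z ^ n) sums K"
  shows "(\<lambda>n. affine_kernel_comb \<omega> a \<alpha> \<beta> \<gamma> n * z ^ n) sums (\<alpha> * z + \<beta> + \<gamma> * K)"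
proof -
  have "(\<lambda>n. (if n = 1 then \<alpha> * z ^ n else 0) + (if n = 0 then \<beta> * z ^ n else 0)
      + \<gamma> * (kernel \<omega> a n * z ^ n)) sums (\<alpha> * z ^ 1 + \<beta> * z ^ 0 + \<gamma> * K)"
    by (intro sums_add sums_single sums_mult assms)
  moreover have "affine_kernel_comb \<omega> a \<alpha> \<beta> \<gamma> n * z ^ n = (if n = 1 then \<alpha> * z ^ n else 0)
      + (if n = 0 then \<beta> * z ^ n else 0) + \<gamma> * (kernel \<omega> a n * z ^ n)" for n
    by (simp add: affine_kernel_comb_def zcoef_def onecoef_def algebra_simps)
  ultimately show ?thesis by simp
qed

lemma winner_affine_kernel_comb:
  assumes "\<And>n. \<omega> n \<noteq> 0" and "(\<lambda>n. f n * a ^ n) sums s"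
  shows "winner \<omega> f (affine_kernel_comb \<omega> a \<alpha> \<beta> \<gamma>)
    = of_real (\<omega> 1) * f 1 * cnj \<alpha> + of_real (\<omega> 0) * f 0 * cnj \<beta> + cnj \<gamma> * s"
proof -
  have "(\<lambda>n. (if n = 1 then of_real (\<omega> n) * f n * cnj \<alpha> else 0)
      + (if n = 0 then of_real (\<omega> n) * f n * cnj \<beta> else 0) + cnj \<gamma> * (f n * a ^ n))
    sums (of_real (\<omega> 1) * f 1 * cnj \<alpha> + of_real (\<omega> 0) * f 0 * cnj \<beta> + cnj \<gamma> * s)"
    by (intro sums_add sums_single sums_mult assms)
  moreover have "of_real (\<omega> n) * f n * cnj (affine_kernel_comb \<omega> a \<alpha> \<beta> \<gamma> n)
      = (if n = 1 then of_real (\<omega> n) * f n * cnj \<alpha> else 0)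
        + (if n = 0 then of_real (\<omega> n) * f n * cnj \<beta> else 0) + cnj \<gamma> * (f n * a ^ n)" for n
    using assms(1)[of n]
    by (simp add: affine_kernel_comb_def zcoef_def onecoef_def kernel_def algebra_simps)
  ultimately show ?thesis by (simp add: winner_def sums_iff)
qed

lemma orthogonal_shifts_affine_kernel_comb:
  fixes \<omega> :: "nat \<Rightarrow> real" and a \<alpha> \<beta> \<gamma> :: complex
  defines "g \<equiv> affine_kernel_comb \<omega> a \<alpha> \<beta> \<gamma>"
  assumes \<omega>: "\<And>n. \<omega> n \<noteq> 0" and "a \<noteq> 0" "\<alpha> \<noteq> 0" "\<gamma> \<noteq> 0"
    and K: "(\<lambda>n. kernel \<omega> a n * a ^ n) sums K"
    and orth: "\<And>m. m \<ge> 1 \<Longrightarrow> winner \<omega> (zpow_mult m g) g = 0"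
  shows "peval g a = 0" and "g 0 = 0"
proof -
  have g_sums: "(\<lambda>n. g n * a ^ n) sums peval g a"
    using sums_affine_kernel_comb[OF K] unfolding g_def peval_def by (simp add: sums_iff)
  have shift: "winner \<omega> (zpow_mult m g) g = of_real (\<omega> 1) * zpow_mult m g 1 * cnj \<alpha>
      + of_real (\<omega> 0) * zpow_mult m g 0 * cnj \<beta> + cnj \<gamma> * (a ^ m * peval g a)" for m
    unfolding g_def
    by (rule winner_affine_kernel_comb[OF \<omega> sums_zpow_mult[OF g_sums[unfolded g_def]]])
  have "cnj \<gamma> * (a ^ 2 * peval g a) = 0"
    using shift[of 2] orth[of 2] by (simp add: zpow_mult_def)
  then show ga: "peval g a = 0" using \<open>a \<noteq> 0\<close> \<open>\<gamma> \<noteq> 0\<close> by simp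
  have "of_real (\<omega> 1) * g 0 * cnj \<alpha> = 0"
    using shift[of 1] orth[of 1] ga by (simp add: zpow_mult_def)
  then show "g 0 = 0" using \<omega>[of 1] \<open>\<alpha> \<noteq> 0\<close> by simp
qed

definition b2_numerator :: "(nat \<Rightarrow> real) \<Rightarrow> complex \<Rightarrow> nat \<Rightarrow> complex" where
  "b2_numerator \<omega> a n = (1 - peval (kernel \<omega> a) a) * zcoef n - a * (onecoef n - kernel \<omega> a n)"

lemma affine_kernel_comb_eq_b2_numerator:
  assumes "\<omega> 0 = 1" and "a \<noteq> 0"
    and K_sums: "(\<lambda>n. kernel \<omega> a n * a ^ n) sums peval (kernel \<omega> a) a"
    and root: "peval (affine_kernel_comb \<omega> a \<alpha> \<beta> \<gamma>) a = 0"
    and zero: "affine_kernel_comb \<omega> a \<alpha> \<beta> \<gamma> 0 = 0"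
  shows "affine_kernel_comb \<omega> a \<alpha> \<beta> \<gamma> n = \<gamma> / a * b2_numerator \<omega> a n"
proof -
  define K where "K = peval (kernel \<omega> a) a"
  have "\<alpha> * a + \<beta> + \<gamma> * K = 0"
    using sums_affine_kernel_comb[OF K_sums] root unfolding K_def peval_def by (simp add: sums_iff)
  moreover have \<beta>: "\<beta> = - \<gamma>"
    using zero \<open>\<omega> 0 = 1\<close>
    by (simp add: affine_kernel_comb_def zcoef_def onecoef_def kernel_def eq_neg_iff_add_eq_0)
  ultimately have "\<alpha> = \<gamma> * (1 - K) / a"
    using \<open>a \<noteq> 0\<close> by (simp add: field_simps)
  then show ?thesis
    using \<beta> \<open>a \<noteq> 0\<close> \<open>\<omega> 0 = 1\<close>
    by (simp add: affine_kernel_comb_def b2_numerator_def zcoef_def onecoef_def kernel_def K_def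
        field_simps)
qed

lemma wnorm2_b2_numerator:
  fixes \<omega> :: "nat \<Rightarrow> real" and a :: complex
  defines "K \<equiv> peval (kernel \<omega> a) a"
  assumes pos: "\<And>n. \<omega> n > 0" and w0: "\<omega> 0 = 1"
    and summable: "summable (\<lambda>n. (cmod a ^ 2) ^ n / \<omega> n)"
  shows "of_real (wnorm2 \<omega> (b2_numerator \<omega> a))
    = (K - 1) * ((K - 1) * of_real (\<omega> 1) - of_real (cmod a ^ 2))"
proof -
  define r where "r = cmod a ^ 2"
  define s where "s = (\<lambda>n. r ^ n / \<omega> n)"
  define Ks where "Ks = suminf s"
  define T where "T = Ks - 1 - r / \<omega> 1"
  have K: "K = of_real Ks"
    using peval_kernel_self(2)[OF summable] by (simp add: K_def Ks_def s_def r_def)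
  have "\<omega> n * cmod (b2_numerator \<omega> a n) ^ 2 = r * s n + (if n = 0 then - r else 0)
      + (if n = 1 then \<omega> 1 * T ^ 2 - r * (r / \<omega> 1) else 0)" for n
  proof -
    consider "n = 0" | "n = 1" | "n \<ge> 2" by linarith
    then show ?thesis
    proof cases
      case 1
      then show ?thesis by (simp add: b2_numerator_def zcoef_def onecoef_def kernel_def w0 s_def)
    next
      case 2
      have "b2_numerator \<omega> a 1 = of_real (- T)"
        using kernel_mult_power[of \<omega> a 1]
        by (simp add: b2_numerator_def zcoef_def onecoef_def K_def[symmetric] K T_def r_def
            mult.commute)
      then show ?thesis using 2 by (simp add: s_def power2_eq_square)
    next
      case 3
      then have "b2_numerator \<omega> a n = a * kernel \<omega> a n"
        by (simp add: b2_numerator_def zcoef_def onecoef_def)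
      then show ?thesis
        using 3 weighted_norm_kernel[of \<omega> n a a] pos[of n] by (simp add: s_def r_def)
    qed
  qed
  moreover have "(\<lambda>n. r * s n + (if n = 0 then - r else 0)
      + (if n = 1 then \<omega> 1 * T ^ 2 - r * (r / \<omega> 1) else 0))
    sums (r * Ks + - r + (\<omega> 1 * T ^ 2 - r * (r / \<omega> 1)))"
    using summable unfolding Ks_def s_def r_def
    by (intro sums_add sums_mult summable_sums sums_single)
  ultimately have "wnorm2 \<omega> (b2_numerator \<omega> a) = r * Ks - r + \<omega> 1 * T ^ 2 - r * (r / \<omega> 1)"
    by (simp add: wnorm2_def sums_iff)
  also have "\<dots> = (Ks - 1) * ((Ks - 1) * \<omega> 1 - r)"
    using pos[of 1] by (simp add: T_def field_simps power2_eq_square)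
  finally show ?thesis by (simp add: K r_def)
qed

lemma wnorm2_scale:
  assumes "inH \<omega> f"
  shows "wnorm2 \<omega> (\<lambda>n. c * f n) = cmod c ^ 2 * wnorm2 \<omega> f"
  using suminf_mult[OF assms[unfolded inH_def], of "cmod c ^ 2"]
  by (simp add: wnorm2_def norm_mult power_mult_distrib mult_ac)

theorem mainTheorem14:
  fixes \<omega> :: "nat \<Rightarrow> real" and a \<alpha> \<beta> \<gamma> :: complex
  assumes pos: "\<And>n. \<omega> n > 0"
    and w0: "\<omega> 0 = 1"
    and ratio: "(\<lambda>n. \<omega> (Suc n) / \<omega> n) \<longlonglongrightarrow> 1"
    and aD: "cmod a < 1" and a0: "a \<noteq> 0"
    and al: "\<alpha> \<noteq> 0" and ga: "\<gamma> \<noteq> 0"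
    and inner: "is_inner \<omega> (\<lambda>n. \<alpha> * zcoef n + \<beta> * onecoef n + \<gamma> * kernel \<omega> a n)"
  shows "let g = (\<lambda>n. \<alpha> * zcoef n + \<beta> * onecoef n + \<gamma> * kernel \<omega> a n);
             Kaa = peval (kernel \<omega> a) a;
             N = (\<lambda>n. (1 - Kaa) * zcoef n - a * (onecoef n - kernel \<omega> a n));
             D = csqrt ((Kaa - 1) * ((Kaa - 1) * complex_of_real (\<omega> 1) - complex_of_real ((cmod a)^2)))
         in peval g a = 0 \<and> peval g 0 = 0 \<and> \<beta> + \<gamma> = 0 \<and>
            (\<exists>c. cmod c = 1 \<and> (\<forall>n. g n = c * (N n / D))) \<and>
            D = complex_of_real (sqrt (wnorm2 \<omega> N))"
proof -
  define g where "g = affine_kernel_comb \<omega> a \<alpha> \<beta> \<gamma>"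
  define K where "K = peval (kernel \<omega> a) a"
  define N where "N = b2_numerator \<omega> a"
  define D where "D = csqrt ((K - 1) * ((K - 1) * of_real (\<omega> 1) - of_real (cmod a ^ 2)))"
  have \<omega>: "\<omega> n \<noteq> 0" for n using pos[of n] by simp
  have summable: "summable (\<lambda>n. (cmod a ^ 2) ^ n / \<omega> n)"
    by (rule summable_kernel_weights[OF pos ratio aD])
  note K_sums = peval_kernel_self(1)[OF summable]
  from inner have "inH \<omega> g" and "wnorm2 \<omega> g = 1"
    and orth: "\<And>m. m \<ge> 1 \<Longrightarrow> winner \<omega> (zpow_mult m g) g = 0"
    by (simp_all add: is_inner_def g_def affine_kernel_comb_def[abs_def])
  have root: "peval g a = 0" and zero: "g 0 = 0"
    using orthogonal_shifts_affine_kernel_comb[OF \<omega> a0 al ga K_sums] orth by (simp_all add: g_def)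
  have g_N: "g n = \<gamma> / a * N n" for n
    using affine_kernel_comb_eq_b2_numerator[OF w0 a0 K_sums] root zero by (simp add: g_def N_def)
  then have "N = (\<lambda>n. a / \<gamma> * g n)" using a0 ga by auto
  then have norm_N: "wnorm2 \<omega> N = cmod (a / \<gamma>) ^ 2"
    using wnorm2_scale[OF \<open>inH \<omega> g\<close>, of "a / \<gamma>"] \<open>wnorm2 \<omega> g = 1\<close> by simp
  have D: "D = of_real (sqrt (wnorm2 \<omega> N))"
    unfolding D_def K_def N_def wnorm2_b2_numerator[OF pos w0 summable, symmetric]
    by (simp add: csqrt_of_real norm_N[unfolded N_def])
  have "D \<noteq> 0" using D norm_N a0 ga by simp
  have g_eq: "(\<lambda>n. \<alpha> * zcoef n + \<beta> * onecoef n + \<gamma> * kernel \<omega> a n) = g"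
    by (simp add: g_def affine_kernel_comb_def[abs_def])
  have N_eq: "(1 - K) * zcoef n - a * (onecoef n - kernel \<omega> a n) = N n" for n
    by (simp add: N_def b2_numerator_def K_def)
  show ?thesis
    unfolding Let_def g_eq K_def[symmetric] N_eq D_def[symmetric]
  proof (intro conjI exI[of _ "\<gamma> / a * D"] allI)
    show "peval g 0 = 0" using zero by (simp add: peval_def)
    show "\<beta> + \<gamma> = 0"
      using zero w0 by (simp add: g_def affine_kernel_comb_def zcoef_def onecoef_def kernel_def)
    show "cmod (\<gamma> / a * D) = 1" using D norm_N a0 ga by (simp add: norm_mult norm_divide)
    show "g n = \<gamma> / a * D * (N n / D)" for n using g_N \<open>D \<noteq> 0\<close> by simp
  qed (use root D in simp_all)
qed

end
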